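(* Let $G=(V,E)$ be a reduced undirected graph (parallel edges allowed) with terminals $s,t$. Every feedback edge set $F\subseteq E$ of $G$ is a tracking edge set for $G$.
   Context: An $s$-$t$ path is a simple path from $s$ to $t$. A set $T\subseteq E$ is a tracking edge set if for any two distinct $s$-$t$ paths $P_1,P_2$, the sequence of edges of $T\cap E(P_1)$ in the order traversed along $P_1$ differs from the sequence of edges of $T\cap E(P_2)$ in the order traversed along $P_2$. A graph is reduced if every vertex and every edge lies on at least one $s$-$t$ path. A feedback edge set is a set of edges whose removal makes the graph acyclic. *)

theory Defs
  imports Main
begin

(* Undirected multigraph: vertex set V, edge set E (edges are abstract objects,
   so parallel edges are allowed), and an endpoint map endp; edge e joins
   u and v iff endp e = (u,v) or endp e = (v,u). *)

definition joins :: "('e \<Rightarrow> 'v \<times> 'v) \<Rightarrow> 'e \<Rightarrow> 'v \<Rightarrow> 'v \<Rightarrow> bool" where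
  "joins endp e u v \<longleftrightarrow> endp e = (u, v) \<or> endp e = (v, u)"

definition wf_graph :: "'v set \<Rightarrow> 'e set \<Rightarrow> ('e \<Rightarrow> 'v \<times> 'v) \<Rightarrow> bool" where
  "wf_graph V E endp \<longleftrightarrow> finite V \<and> finite E \<and>
     (\<forall>e\<in>E. fst (endp e) \<in> V \<and> snd (endp e) \<in> V)"

definition walk_in :: "'e set \<Rightarrow> ('e \<Rightarrow> 'v \<times> 'v) \<Rightarrow> 'v list \<Rightarrow> 'e list \<Rightarrow> bool" where
  "walk_in E endp vs es \<longleftrightarrow> length vs = Suc (length es) \<and> set es \<subseteq> E \<and>
     (\<forall>i<length es. joins endp (es ! i) (vs ! i) (vs ! Suc i))"

definition st_path :: "'v set \<Rightarrow> 'e set \<Rightarrow> ('e \<Rightarrow> 'v \<times> 'v) \<Rightarrow> 'v \<Rightarrow> 'v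
    \<Rightarrow> 'v list \<Rightarrow> 'e list \<Rightarrow> bool" where
  "st_path V E endp s t vs es \<longleftrightarrow> walk_in E endp vs es \<and> set vs \<subseteq> V \<and>
     hd vs = s \<and> last vs = t \<and> distinct vs"

(* cycle: closed walk with at least one edge, distinct edges, distinct vertices
   apart from the repeated start/end vertex (loops and pairs of parallel edges
   are cycles) *)
definition cycle_in :: "'e set \<Rightarrow> ('e \<Rightarrow> 'v \<times> 'v) \<Rightarrow> 'v list \<Rightarrow> 'e list \<Rightarrow> bool" where
  "cycle_in E endp vs es \<longleftrightarrow> walk_in E endp vs es \<and> es \<noteq> [] \<and>
     hd vs = last vs \<and> distinct (butlast vs) \<and> distinct es"

definition acyclic_graph :: "'v set \<Rightarrow> 'e set \<Rightarrow> ('e \<Rightarrow> 'v \<times> 'v) \<Rightarrow> bool" where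
  "acyclic_graph V E endp \<longleftrightarrow> \<not> (\<exists>vs es. set vs \<subseteq> V \<and> cycle_in E endp vs es)"

definition feedback_edge_set :: "'v set \<Rightarrow> 'e set \<Rightarrow> ('e \<Rightarrow> 'v \<times> 'v) \<Rightarrow> 'e set \<Rightarrow> bool" where
  "feedback_edge_set V E endp F \<longleftrightarrow> F \<subseteq> E \<and> acyclic_graph V (E - F) endp"

definition reduced :: "'v set \<Rightarrow> 'e set \<Rightarrow> ('e \<Rightarrow> 'v \<times> 'v) \<Rightarrow> 'v \<Rightarrow> 'v \<Rightarrow> bool" where
  "reduced V E endp s t \<longleftrightarrow>
     (\<forall>v\<in>V. \<exists>vs es. st_path V E endp s t vs es \<and> v \<in> set vs) \<and>
     (\<forall>e\<in>E. \<exists>vs es. st_path V E endp s t vs es \<and> e \<in> set es)"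

definition tracking_edge_set :: "'v set \<Rightarrow> 'e set \<Rightarrow> ('e \<Rightarrow> 'v \<times> 'v) \<Rightarrow> 'v \<Rightarrow> 'v
    \<Rightarrow> 'e set \<Rightarrow> bool" where
  "tracking_edge_set V E endp s t T \<longleftrightarrow> T \<subseteq> E \<and>
     (\<forall>vs1 es1 vs2 es2. st_path V E endp s t vs1 es1 \<and> st_path V E endp s t vs2 es2 \<and>
        (vs1, es1) \<noteq> (vs2, es2) \<longrightarrow>
        filter (\<lambda>e. e \<in> T) es1 \<noteq> filter (\<lambda>e. e \<in> T) es2)"

end

theory Submission
  imports Defs
begin

(*
  Suppose two distinct s-t paths use the same edges of F. Then the symmetric
  difference D of their edge sets lies in E - F. On a path every vertex has even
  degree except the two ends of a nontrivial path, and both paths have the same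
  ends, so every vertex has even degree in D; in particular no edge of D is
  pendant. A nonempty loopless edge set without pendant edges contains a cycle
  (a maximal path cannot be extended), contradicting the acyclicity of E - F.
  Hence D is empty, and a path is determined by its start and its edge set.
*)

lemma card_symdiff_parity:
  assumes "finite A" "finite B"
  shows "even (card ((A - B) \<union> (B - A))) \<longleftrightarrow> even (card A + card B)"
proof -
  have "card ((A - B) \<union> (B - A)) = card (A - B) + card (B - A)"
    using assms by (intro card_Un_disjoint) auto
  moreover have "card A = card (A \<inter> B) + card (A - B)" "card B = card (B \<inter> A) + card (B - A)"
    using assms card_Int_Diff by blast+
  moreover have "B \<inter> A = A \<inter> B" by blast
  ultimately show ?thesis by presburger
qed

definition incident :: "('e \<Rightarrow> 'v \<times> 'v) \<Rightarrow> 'e \<Rightarrow> 'v \<Rightarrow> bool" where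
  "incident endp e v \<longleftrightarrow> v = fst (endp e) \<or> v = snd (endp e)"

definition incident_edges :: "('e \<Rightarrow> 'v \<times> 'v) \<Rightarrow> 'e set \<Rightarrow> 'v \<Rightarrow> 'e set" where
  "incident_edges endp A v = {e \<in> A. incident endp e v}"

lemma joins_incident:
  assumes "joins endp e u w"
  shows "incident endp e x \<longleftrightarrow> x = u \<or> x = w"
  using assms unfolding joins_def incident_def by auto

lemma joins_unique: "joins endp e u w \<Longrightarrow> joins endp e u w' \<Longrightarrow> w = w'"
  unfolding joins_def by auto

lemma walk_length: "walk_in E endp vs es \<Longrightarrow> length vs = Suc (length es)"
  unfolding walk_in_def by simp

lemma walk_joins_nth:
  "walk_in E endp vs es \<Longrightarrow> i < length es \<Longrightarrow> joins endp (es ! i) (vs ! i) (vs ! Suc i)"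
  unfolding walk_in_def by blast

lemma walk_last: "walk_in E endp vs es \<Longrightarrow> last vs = vs ! length es"
  by (metis walk_length diff_Suc_1 last_conv_nth list.size(3) nat.distinct(1))

lemma walk_incident_mem:
  assumes "walk_in E endp vs es" "e \<in> set es" "incident endp e v"
  shows "v \<in> set vs"
proof -
  obtain i where i: "i < length es" "e = es ! i" using assms(2) by (metis in_set_conv_nth)
  then have "v = vs ! i \<or> v = vs ! Suc i"
    using walk_joins_nth[OF assms(1) i(1)] assms(3) joins_incident by metis
  then show ?thesis using walk_length[OF assms(1)] i(1) by (metis Suc_less_eq less_SucI nth_mem)
qed

lemma walk_snoc:
  assumes "walk_in E endp vs es" "e \<in> E" "joins endp e (last vs) w"
  shows "walk_in E endp (vs @ [w]) (es @ [e])"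
  using assms walk_length[OF assms(1)] walk_last[OF assms(1)]
  unfolding walk_in_def by (auto simp: nth_append less_Suc_eq)

lemma walk_drop:
  assumes "walk_in E endp vs es" "j \<le> length es"
  shows "walk_in E endp (drop j vs) (drop j es)"
  using assms walk_length[OF assms(1)] set_drop_subset[of j es]
  unfolding walk_in_def by (auto simp: add.commute[of j])

lemma walk_Cons_tl: "walk_in E endp (v # vs) (e # es) \<Longrightarrow> walk_in E endp vs es"
  using walk_drop[of E endp "v # vs" "e # es" 1] by simp

lemma walk_mono: "walk_in D endp vs es \<Longrightarrow> D \<subseteq> E \<Longrightarrow> walk_in E endp vs es"
  unfolding walk_in_def by auto

lemma cycle_mono: "cycle_in D endp vs es \<Longrightarrow> D \<subseteq> E \<Longrightarrow> cycle_in E endp vs es"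
  unfolding cycle_in_def using walk_mono by blast

lemma path_incident_index:
  assumes "walk_in E endp vs es" "distinct vs" "i < length es" "k < length vs"
    "incident endp (es ! i) (vs ! k)"
  shows "k = i \<or> k = Suc i"
proof -
  have "vs ! k = vs ! i \<or> vs ! k = vs ! Suc i"
    using walk_joins_nth[OF assms(1,3)] assms(5) joins_incident by metis
  then show ?thesis using assms(2-4) walk_length[OF assms(1)] by (auto simp: nth_eq_iff_index_eq)
qed

lemma path_distinct_edges:
  assumes "walk_in E endp vs es" "distinct vs"
  shows "distinct es"
  unfolding distinct_conv_nth
proof (intro allI impI notI)
  fix i j assume ij: "i < length es" "j < length es" "i \<noteq> j" "es ! i = es ! j"
  have l: "length vs = Suc (length es)" using walk_length[OF assms(1)] .
  have "incident endp (es ! i) (vs ! j)"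
    using walk_joins_nth[OF assms(1) ij(2)] ij(4) joins_incident by metis
  then have ji: "j = i \<or> j = Suc i" using path_incident_index[OF assms ij(1)] ij(2) l by simp
  have "incident endp (es ! j) (vs ! i)"
    using walk_joins_nth[OF assms(1) ij(1)] ij(4) joins_incident by metis
  then have "i = j \<or> i = Suc j" using path_incident_index[OF assms ij(2)] ij(1) l by simp
  then show False using ji ij(3) by auto
qed

lemma path_no_loop:
  assumes "walk_in E endp vs es" "distinct vs" "e \<in> set es"
  shows "fst (endp e) \<noteq> snd (endp e)"
proof -
  obtain i where i: "i < length es" "e = es ! i" using assms(3) by (metis in_set_conv_nth)
  have "vs ! i \<noteq> vs ! Suc i"
    using assms(2) walk_length[OF assms(1)] i by (simp add: nth_eq_iff_index_eq)
  then show ?thesis using walk_joins_nth[OF assms(1) i(1)] i unfolding joins_def by auto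
qed

lemma path_Nil_iff:
  assumes "walk_in E endp vs es" "distinct vs"
  shows "es = [] \<longleftrightarrow> hd vs = last vs"
proof -
  have "hd vs = vs ! 0" using walk_length[OF assms(1)] by (cases vs) auto
  then show ?thesis
    using assms(2) walk_length[OF assms(1)] walk_last[OF assms(1)] by (simp add: nth_eq_iff_index_eq)
qed

lemma path_incident_edges:
  assumes "walk_in E endp vs es" "distinct vs" "k < length vs"
  shows "incident_edges endp (set es) (vs ! k) =
    (if 0 < k then {es ! (k - 1)} else {}) \<union> (if k < length es then {es ! k} else {})"
proof (rule set_eqI)
  have l: "length vs = Suc (length es)" using walk_length[OF assms(1)] .
  have inc_iff: "incident endp (es ! i) (vs ! k) \<longleftrightarrow> k = i \<or> k = Suc i" if "i < length es" for i
    using path_incident_index[OF assms(1,2) that assms(3)]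
      walk_joins_nth[OF assms(1) that] joins_incident by metis
  fix e
  show "e \<in> incident_edges endp (set es) (vs ! k) \<longleftrightarrow>
    e \<in> (if 0 < k then {es ! (k - 1)} else {}) \<union> (if k < length es then {es ! k} else {})"
  proof
    assume "e \<in> incident_edges endp (set es) (vs ! k)"
    then obtain i where i: "i < length es" "e = es ! i" "incident endp (es ! i) (vs ! k)"
      unfolding incident_edges_def by (auto simp: in_set_conv_nth)
    then show "e \<in> (if 0 < k then {es ! (k - 1)} else {}) \<union> (if k < length es then {es ! k} else {})"
      using inc_iff by auto
  next
    assume "e \<in> (if 0 < k then {es ! (k - 1)} else {}) \<union> (if k < length es then {es ! k} else {})"
    then consider "0 < k" "e = es ! (k - 1)" | "k < length es" "e = es ! k"
      by (auto split: if_splits)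
    then show "e \<in> incident_edges endp (set es) (vs ! k)"
    proof cases
      case 1
      then show ?thesis using inc_iff[of "k - 1"] l assms(3) unfolding incident_edges_def by auto
    next
      case 2
      then show ?thesis using inc_iff[of k] unfolding incident_edges_def by auto
    qed
  qed
qed

lemma path_degree_parity:
  assumes "walk_in E endp vs es" "distinct vs"
  shows "odd (card (incident_edges endp (set es) v)) \<longleftrightarrow>
    es \<noteq> [] \<and> (v = hd vs \<or> v = last vs)"
proof (cases "v \<in> set vs")
  case False
  then have "incident_edges endp (set es) v = {}"
    using walk_incident_mem[OF assms(1)] unfolding incident_edges_def by auto
  moreover have "hd vs \<in> set vs" "last vs \<in> set vs"
    using walk_length[OF assms(1)] by (auto intro: hd_in_set last_in_set)
  ultimately show ?thesis using False by auto
next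
  case True
  then obtain k where k: "k < length vs" "v = vs ! k" by (metis in_set_conv_nth)
  have l: "length vs = Suc (length es)" using walk_length[OF assms(1)] .
  have hd: "hd vs = vs ! 0" using l by (cases vs) auto
  have last: "last vs = vs ! length es" using walk_last[OF assms(1)] .
  have at_hd: "v = hd vs \<longleftrightarrow> k = 0" and at_last: "v = last vs \<longleftrightarrow> k = length es"
    using k l assms(2) hd last by (auto simp: nth_eq_iff_index_eq)
  note edges = path_incident_edges[OF assms k(1), folded k(2)]
  consider "k = 0" | "k = length es" "k \<noteq> 0" | "0 < k" "k < length es"
    using k(1) l by linarith
  then show ?thesis
  proof cases
    case 3
    then have "es ! (k - 1) \<noteq> es ! k"
      using path_distinct_edges[OF assms] by (simp add: nth_eq_iff_index_eq)
    then show ?thesis using 3 edges at_hd at_last by auto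
  qed (use edges at_hd at_last in auto)
qed

definition loopless :: "('e \<Rightarrow> 'v \<times> 'v) \<Rightarrow> 'e set \<Rightarrow> bool" where
  "loopless endp D \<longleftrightarrow> (\<forall>e\<in>D. fst (endp e) \<noteq> snd (endp e))"

definition no_pendant_edges :: "('e \<Rightarrow> 'v \<times> 'v) \<Rightarrow> 'e set \<Rightarrow> bool" where
  "no_pendant_edges endp D \<longleftrightarrow>
     (\<forall>e\<in>D. \<forall>v. incident endp e v \<longrightarrow> (\<exists>e'\<in>D. e' \<noteq> e \<and> incident endp e' v))"

lemma path_close_cycle:
  assumes "walk_in D endp vs es" "distinct vs" "e \<in> D" "e \<notin> set es" "j < length es"
    "joins endp e (last vs) (vs ! j)"
  shows "cycle_in D endp (drop j vs @ [vs ! j]) (drop j es @ [e])"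
proof -
  have l: "length vs = Suc (length es)" using walk_length[OF assms(1)] .
  have "last (drop j vs) = last vs" using l assms(5) by simp
  then have "walk_in D endp (drop j vs @ [vs ! j]) (drop j es @ [e])"
    using walk_snoc[OF walk_drop[OF assms(1)] assms(3)] assms(5,6) by simp
  moreover have "distinct (drop j es @ [e])"
    using path_distinct_edges[OF assms(1,2)] assms(4) set_drop_subset[of j es] by auto
  ultimately show ?thesis
    unfolding cycle_in_def using assms(2,5) l by (simp add: hd_drop_conv_nth)
qed

lemma cycle_from_path_without_pendant_edges:
  assumes "wf_graph V D endp" "loopless endp D" "no_pendant_edges endp D"
    and "walk_in D endp vs es" "distinct vs" "set vs \<subseteq> V" "es \<noteq> []"
  shows "\<exists>cvs ces. set cvs \<subseteq> V \<and> cycle_in D endp cvs ces"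
  using assms(4-)
proof (induction "card V - length vs" arbitrary: vs es rule: less_induct)
  case less
  have l: "length vs = Suc (length es)" using walk_length[OF less.prems(1)] .
  have last: "last vs = vs ! length es" using walk_last[OF less.prems(1)] .
  define e where "e = es ! (length es - 1)"
  have at_last: "incident_edges endp (set es) (last vs) = {e}"
    using path_incident_edges[OF less.prems(1,2), of "length es"] last l less.prems(4)
    unfolding e_def by simp
  then have "e \<in> D" "incident endp e (last vs)"
    using less.prems(1) unfolding incident_edges_def walk_in_def by auto
  then obtain e' where e': "e' \<in> D" "e' \<noteq> e" "incident endp e' (last vs)"
    using assms(3) unfolding no_pendant_edges_def by blast
  then have "e' \<notin> set es" using at_last unfolding incident_edges_def by blast
  obtain w where w: "joins endp e' (last vs) w"
    using e'(3) unfolding incident_def joins_def by (metis prod.collapse)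
  have "w \<noteq> last vs" "w \<in> V"
    using w e'(1) assms(1,2) unfolding joins_def loopless_def wf_graph_def by auto
  show ?case
  proof (cases "w \<in> set vs")
    case False
    let ?vs = "vs @ [w]"
    have walk: "walk_in D endp ?vs (es @ [e'])" using walk_snoc[OF less.prems(1) e'(1) w] .
    have dist: "distinct ?vs" and sub: "set ?vs \<subseteq> V"
      using False less.prems(2,3) \<open>w \<in> V\<close> by auto
    have "length ?vs \<le> card V"
      using card_mono[OF _ sub] distinct_card[OF dist] assms(1) unfolding wf_graph_def by simp
    then have "card V - length ?vs < card V - length vs" by simp
    then show ?thesis using less.hyps walk dist sub by blast
  next
    case True
    then obtain j where j: "j < length vs" "w = vs ! j" by (metis in_set_conv_nth)
    with \<open>w \<noteq> last vs\<close> last l have "j < length es" by (metis less_antisym)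
    have "set (drop j vs @ [vs ! j]) \<subseteq> V"
      using less.prems(3) set_drop_subset[of j vs] j by auto
    then show ?thesis
      using path_close_cycle[OF less.prems(1,2) e'(1) \<open>e' \<notin> set es\<close> \<open>j < length es\<close>] w j by blast
  qed
qed

lemma has_cycle_if_no_pendant_edges:
  assumes "wf_graph V D endp" "D \<noteq> {}" "loopless endp D" "no_pendant_edges endp D"
  shows "\<exists>vs es. set vs \<subseteq> V \<and> cycle_in D endp vs es"
proof -
  obtain e a b where e: "e \<in> D" "endp e = (a, b)" using assms(2) by (metis ex_in_conv prod.exhaust)
  have "walk_in D endp [a, b] [e]" using e unfolding walk_in_def joins_def by simp
  moreover have "distinct [a, b]" "set [a, b] \<subseteq> V"
    using e assms(1,3) unfolding loopless_def wf_graph_def by force+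
  ultimately show ?thesis
    using cycle_from_path_without_pendant_edges[OF assms(1,3,4)] by blast
qed

lemma paths_symdiff_no_pendant_edges:
  assumes "walk_in E endp vs1 es1" "distinct vs1" "walk_in E endp vs2 es2" "distinct vs2"
    "hd vs1 = hd vs2" "last vs1 = last vs2"
  shows "no_pendant_edges endp ((set es1 - set es2) \<union> (set es2 - set es1))"
  unfolding no_pendant_edges_def
proof (intro ballI allI impI)
  fix e v
  assume "e \<in> (set es1 - set es2) \<union> (set es2 - set es1)" "incident endp e v"
  let ?I1 = "incident_edges endp (set es1) v" and ?I2 = "incident_edges endp (set es2) v"
  have e: "e \<in> (?I1 - ?I2) \<union> (?I2 - ?I1)"
    using \<open>e \<in> _\<close> \<open>incident endp e v\<close> unfolding incident_edges_def by auto
  have "odd (card ?I1) \<longleftrightarrow> odd (card ?I2)"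
    using path_degree_parity[OF assms(1,2)] path_degree_parity[OF assms(3,4)]
      path_Nil_iff[OF assms(1,2)] path_Nil_iff[OF assms(3,4)] assms(5,6) by simp
  then have "even (card ((?I1 - ?I2) \<union> (?I2 - ?I1)))"
    using card_symdiff_parity[of ?I1 ?I2] unfolding incident_edges_def by simp
  then have "(?I1 - ?I2) \<union> (?I2 - ?I1) \<noteq> {e}" by auto
  then obtain e' where "e' \<in> (?I1 - ?I2) \<union> (?I2 - ?I1)" "e' \<noteq> e" using e by blast
  then show "\<exists>e'\<in>(set es1 - set es2) \<union> (set es2 - set es1). e' \<noteq> e \<and> incident endp e' v"
    unfolding incident_edges_def by auto
qed

lemma path_eq_if_same_edge_set:
  assumes "walk_in E endp vs1 es1" "distinct vs1" "walk_in E endp vs2 es2" "distinct vs2"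
    "hd vs1 = hd vs2" "set es1 = set es2"
  shows "vs1 = vs2 \<and> es1 = es2"
  using assms
proof (induction es1 arbitrary: vs1 vs2 es2)
  case Nil
  then show ?case using walk_length[OF Nil.prems(1)] walk_length[OF Nil.prems(3)]
    by (auto simp: length_Suc_conv)
next
  case (Cons e es1)
  obtain a x vs1' where vs1: "vs1 = a # x # vs1'"
    using walk_length[OF Cons.prems(1)] by (auto simp: length_Suc_conv)
  obtain g es2' where es2: "es2 = g # es2'" using Cons.prems(6) by (cases es2) auto
  obtain y vs2' where vs2: "vs2 = a # y # vs2'"
    using walk_length[OF Cons.prems(3)] Cons.prems(5) vs1 es2 by (auto simp: length_Suc_conv)
  have "incident_edges endp (set (e # es1)) a = {e}"
    using path_incident_edges[OF Cons.prems(1,2), of 0] vs1 by simp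
  moreover have "incident endp g a" "g \<in> set (e # es1)"
    using walk_joins_nth[OF Cons.prems(3), of 0] Cons.prems(6) vs2 es2
    unfolding joins_def incident_def by auto
  ultimately have "g = e" unfolding incident_edges_def by blast
  then have "x = y"
    using walk_joins_nth[OF Cons.prems(1), of 0] walk_joins_nth[OF Cons.prems(3), of 0] vs1 vs2 es2
    by (auto intro: joins_unique)
  have same_tl: "set es1 = set es2'"
    using Cons.prems(6) path_distinct_edges[OF Cons.prems(1,2)]
      path_distinct_edges[OF Cons.prems(3,4)] es2 \<open>g = e\<close> by auto
  have "walk_in E endp (x # vs1') es1" "walk_in E endp (y # vs2') es2'"
    using walk_Cons_tl Cons.prems(1,3) vs1 vs2 es2 by metis+
  from Cons.IH[OF this(1) _ this(2) _ _ same_tl]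
  have "x # vs1' = y # vs2' \<and> es1 = es2'"
    using Cons.prems(2,4) vs1 vs2 \<open>x = y\<close> by simp
  then show ?case using vs1 vs2 es2 \<open>g = e\<close> by simp
qed

theorem mainTheorem11:
  fixes V :: "'v set" and E :: "'e set" and endp :: "'e \<Rightarrow> 'v \<times> 'v"
    and s t :: 'v and F :: "'e set"
  assumes "wf_graph V E endp"
    and "s \<in> V" and "t \<in> V"
    and "reduced V E endp s t"
    and "feedback_edge_set V E endp F"
  shows "tracking_edge_set V E endp s t F"
proof -
  have "filter (\<lambda>e. e \<in> F) es1 \<noteq> filter (\<lambda>e. e \<in> F) es2"
    if p1: "st_path V E endp s t vs1 es1" and p2: "st_path V E endp s t vs2 es2"
      and neq: "(vs1, es1) \<noteq> (vs2, es2)" for vs1 es1 vs2 es2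
  proof
    assume "filter (\<lambda>e. e \<in> F) es1 = filter (\<lambda>e. e \<in> F) es2"
    then have same_F: "set es1 \<inter> F = set es2 \<inter> F" by (metis inter_set_filter Int_commute)
    have w1: "walk_in E endp vs1 es1" "distinct vs1" and w2: "walk_in E endp vs2 es2" "distinct vs2"
      and ends: "hd vs1 = hd vs2" "last vs1 = last vs2"
      using p1 p2 unfolding st_path_def by auto
    define D where "D = (set es1 - set es2) \<union> (set es2 - set es1)"
    have "D \<subseteq> E - F" using same_F w1 w2 unfolding D_def walk_in_def by blast
    have "D \<noteq> {}" using path_eq_if_same_edge_set[OF w1 w2 ends(1)] neq unfolding D_def by auto
    moreover have "wf_graph V D endp"
      using assms(1) \<open>D \<subseteq> E - F\<close> unfolding wf_graph_def by (auto intro: finite_subset)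
    moreover have "loopless endp D"
      using path_no_loop[OF w1] path_no_loop[OF w2] unfolding D_def loopless_def by blast
    moreover have "no_pendant_edges endp D"
      using paths_symdiff_no_pendant_edges[OF w1 w2 ends] unfolding D_def .
    ultimately obtain cvs ces where "set cvs \<subseteq> V" "cycle_in D endp cvs ces"
      using has_cycle_if_no_pendant_edges by blast
    then show False
      using assms(5) cycle_mono[OF _ \<open>D \<subseteq> E - F\<close>]
      unfolding feedback_edge_set_def acyclic_graph_def by blast
  qed
  then show ?thesis
    using assms(5) unfolding tracking_edge_set_def feedback_edge_set_def by blast
qed

end
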